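(* Let $n_1,n_3,n_5>0$ and $\theta_1,\theta_3,\theta_5\in[0,\pi/2)$ satisfy $n_1\sin\theta_1=n_3\sin\theta_3=n_5\sin\theta_5$, and put $c_i=\cos\theta_i/n_i$ for $i=1,3,5$. Let $a_0>0$, $r_2>0$, $r_4>0$, $\tau>0$ and \[ a_1=2\pi c_3\frac{2c_1}{c_1+c_3},\qquad a_2=2\pi c_3\frac{c_1-c_3}{c_1+c_3},\qquad a_5=\frac{2c_5}{c_5+c_3}. \] Define the real $3\times 3$ matrices \[ A=\begin{pmatrix}-a_1r_2&0&a_1a_0\\0&-(a_1-a_2)r_4a_5&0\\0&0&-1\end{pmatrix},\quad B=\begin{pmatrix}0&0&0\\-a_5a_1r_2&0&a_2a_0a_5\\0&-\frac{a_5r_4}{a_0}&0\end{pmatrix}, \] \[ C=\begin{pmatrix}0&0&0\\0&0&0\\-\frac{a_1r_2(a_5-1)}{(a_1-a_2)a_0}&0&\frac{a_2(a_5-1)}{a_1-a_2}\end{pmatrix}, \] and for $\epsilon\ge 0$ let $E(\epsilon)=\mathrm{diag}(1,1,\epsilon)$ and \[ \Delta(\epsilon,s)=sE(\epsilon)-A-Be^{-\tau s}-Ce^{-2\tau s},\qquad s\in\mathbb{C}. \] Let $\sigma(\epsilon)=\{\lambda\in\mathbb{C}:\det\Delta(\epsilon,\lambda)=0\}$. Then for every $\epsilon\ge 0$: (a) $0\in\sigma(\epsilon)$ and $\lambda=0$ is a simple root of $\det\Delta(\epsilon,\lambda)=0$; (b) every $\lambda\in\sigma(\epsilon)\setminus\{0\}$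 satisfies $\Re(\lambda)<0$.
   Context: Here $\Delta(\epsilon,s)$ is the characteristic matrix of the (for $\epsilon>0$ singularly perturbed) linear delay system $\frac{d}{dt}(E(\epsilon)x(t))=Ax(t)+Bx(t-\tau)+Cx(t-2\tau)+h(t)$ in $\mathbb{R}^3$. Note $a_1-a_2=2\pi c_3>0$. *)

theory Defs
  imports "HOL-Analysis.Analysis"
begin

text \<open>Coefficients of the model; c1 c3 c5 stand for cos(theta_i)/n_i.\<close>

definition coef_a1 :: "real \<Rightarrow> real \<Rightarrow> real" where
  "coef_a1 c1 c3 = 2 * pi * c3 * (2 * c1 / (c1 + c3))"

definition coef_a2 :: "real \<Rightarrow> real \<Rightarrow> real" where
  "coef_a2 c1 c3 = 2 * pi * c3 * ((c1 - c3) / (c1 + c3))"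

definition coef_a5 :: "real \<Rightarrow> real \<Rightarrow> real" where
  "coef_a5 c3 c5 = 2 * c5 / (c5 + c3)"

definition matA :: "real \<Rightarrow> real \<Rightarrow> real \<Rightarrow> real \<Rightarrow> real \<Rightarrow> real \<Rightarrow> real^3^3" where
  "matA a0 r2 r4 a1 a2 a5 = vector [
     vector [- a1 * r2, 0, a1 * a0],
     vector [0, - (a1 - a2) * r4 * a5, 0],
     vector [0, 0, -1]]"

definition matB :: "real \<Rightarrow> real \<Rightarrow> real \<Rightarrow> real \<Rightarrow> real \<Rightarrow> real \<Rightarrow> real^3^3" where
  "matB a0 r2 r4 a1 a2 a5 = vector [
     vector [0, 0, 0],
     vector [- a5 * a1 * r2, 0, a2 * a0 * a5],
     vector [0, - (a5 * r4 / a0), 0]]"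

definition matC :: "real \<Rightarrow> real \<Rightarrow> real \<Rightarrow> real \<Rightarrow> real \<Rightarrow> real \<Rightarrow> real^3^3" where
  "matC a0 r2 r4 a1 a2 a5 = vector [
     vector [0, 0, 0],
     vector [0, 0, 0],
     vector [- (a1 * r2 * (a5 - 1) / ((a1 - a2) * a0)), 0, a2 * (a5 - 1) / (a1 - a2)]]"

definition matE :: "real \<Rightarrow> real^3^3" where
  "matE eps = vector [vector [1, 0, 0], vector [0, 1, 0], vector [0, 0, eps]]"

definition charmat ::
  "real \<Rightarrow> real \<Rightarrow> real \<Rightarrow> real \<Rightarrow> real \<Rightarrow> real \<Rightarrow> real \<Rightarrow> real \<Rightarrow> complex \<Rightarrow> complex^3^3" where
  "charmat a0 r2 r4 tau c1 c3 c5 eps s =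
     (let a1 = coef_a1 c1 c3; a2 = coef_a2 c1 c3; a5 = coef_a5 c3 c5;
          A = matA a0 r2 r4 a1 a2 a5; B = matB a0 r2 r4 a1 a2 a5; C = matC a0 r2 r4 a1 a2 a5
      in (\<chi> i j. s * of_real (matE eps $ i $ j) - of_real (A $ i $ j)
                 - of_real (B $ i $ j) * exp (- (of_real tau * s))
                 - of_real (C $ i $ j) * exp (- (2 * of_real tau * s))))"

end

theory Submission
  imports Defs
begin

text \<open>Expanding the determinant, the terms with a single delay factor cancel and
  \<open>det \<Delta>(\<epsilon>, s) = (s + \<alpha>) (s + \<beta>) (\<epsilon> s + 1) - exp (-2\<tau>s) (\<alpha> - \<rho> s) (\<beta> - \<kappa> s)\<close>
  with \<open>\<alpha>, \<beta> > 0\<close> and the reflection coefficients \<open>\<rho> = (c\<^sub>1 - c\<^sub>3) / (c\<^sub>1 + c\<^sub>3)\<close>,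
  \<open>\<kappa> = (c\<^sub>5 - c\<^sub>3) / (c\<^sub>5 + c\<^sub>3)\<close>, both of modulus less than 1. On the closed right
  half-plane minus the origin, \<open>|\<alpha> - \<rho> s| < |s + \<alpha>|\<close>, \<open>|\<beta> - \<kappa> s| < |s + \<beta>|\<close>,
  \<open>|\<epsilon> s + 1| \<ge> 1\<close> and \<open>|exp (-2\<tau>s)| \<le> 1\<close>, so the two terms cannot cancel. At the
  origin they do cancel, with derivative \<open>(1 + \<rho>) \<beta> + (1 + \<kappa>) \<alpha> + (\<epsilon> + 2\<tau>) \<alpha> \<beta> > 0\<close>.\<close>

definition char_quasipoly ::
  "real \<Rightarrow> real \<Rightarrow> real \<Rightarrow> real \<Rightarrow> real \<Rightarrow> real \<Rightarrow> complex \<Rightarrow> complex" where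
  "char_quasipoly \<alpha> \<beta> \<rho> \<kappa> eps tau s =
     (s + of_real \<alpha>) * (s + of_real \<beta>) * (of_real eps * s + 1)
     - exp (- (of_real tau * s))^2 * (of_real \<alpha> - of_real \<rho> * s) * (of_real \<beta> - of_real \<kappa> * s)"

lemma det_charmat_eq_char_quasipoly:
  fixes a0 r2 r4 tau c1 c3 c5 eps :: real and s :: complex
  assumes "a0 \<noteq> 0" "coef_a1 c1 c3 \<noteq> coef_a2 c1 c3"
  defines "a1 \<equiv> coef_a1 c1 c3" and "a2 \<equiv> coef_a2 c1 c3" and "a5 \<equiv> coef_a5 c3 c5"
  shows "det (charmat a0 r2 r4 tau c1 c3 c5 eps s) =
    char_quasipoly (a1 * r2) ((a1 - a2) * r4 * a5) (a2 / (a1 - a2)) (a5 - 1) eps tau s"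
proof -
  define x where "x = exp (- (of_real tau * s))"
  have exp_double: "exp (- (2 * of_real tau * s)) = x^2"
    unfolding x_def power2_eq_square exp_add[symmetric] by (simp add: algebra_simps)
  have "complex_of_real a1 - of_real a2 \<noteq> 0"
    using assms(2) unfolding a1_def a2_def by (metis of_real_diff of_real_eq_0_iff right_minus_eq)
  then have inv_diff: "inverse (complex_of_real a1 - of_real a2) * (complex_of_real a1 - of_real a2) = 1"
    by simp
  have inv_a0: "inverse (complex_of_real a0) * complex_of_real a0 = 1"
    using assms(1) by simp
  show ?thesis
    unfolding det_3 charmat_def char_quasipoly_def Let_def exp_double
      a1_def[symmetric] a2_def[symmetric] a5_def[symmetric] x_def[symmetric]
    apply (simp only: matA_def matB_def matC_def matE_def vector_3 vec_lambda_beta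
        of_real_mult of_real_diff of_real_minus of_real_divide of_real_0 of_real_1
        divide_inverse of_real_inverse inverse_mult_distrib)
    using inv_diff inv_a0 by algebra
qed

lemma char_quasipoly_at_0: "char_quasipoly \<alpha> \<beta> \<rho> \<kappa> eps tau 0 = 0"
  by (simp add: char_quasipoly_def)

lemma deriv_char_quasipoly_at_0:
  "deriv (char_quasipoly \<alpha> \<beta> \<rho> \<kappa> eps tau) 0 =
     of_real (\<alpha> + \<beta> + eps * \<alpha> * \<beta> + 2 * tau * \<alpha> * \<beta> + \<rho> * \<beta> + \<kappa> * \<alpha>)"
proof (rule DERIV_imp_deriv)
  show "(char_quasipoly \<alpha> \<beta> \<rho> \<kappa> eps tau has_field_derivative
          of_real (\<alpha> + \<beta> + eps * \<alpha> * \<beta> + 2 * tau * \<alpha> * \<beta> + \<rho> * \<beta> + \<kappa> * \<alpha>)) (at 0)"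
    unfolding char_quasipoly_def [abs_def]
    by (auto intro!: derivative_eq_intros simp: algebra_simps)
qed

lemma deriv_char_quasipoly_at_0_nonzero:
  assumes "\<alpha> > 0" "\<beta> > 0" "\<bar>\<rho>\<bar> < 1" "\<bar>\<kappa>\<bar> < 1" "eps \<ge> 0" "tau \<ge> 0"
  shows "deriv (char_quasipoly \<alpha> \<beta> \<rho> \<kappa> eps tau) 0 \<noteq> 0"
proof -
  have "(1 + \<rho>) * \<beta> > 0" "(1 + \<kappa>) * \<alpha> > 0"
    using assms by (auto simp: abs_less_iff)
  moreover have "(eps + 2 * tau) * \<alpha> * \<beta> \<ge> 0"
    using assms by simp
  ultimately have "\<alpha> + \<beta> + eps * \<alpha> * \<beta> + 2 * tau * \<alpha> * \<beta> + \<rho> * \<beta> + \<kappa> * \<alpha> > 0"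
    by (simp add: algebra_simps)
  then show ?thesis
    unfolding deriv_char_quasipoly_at_0 of_real_eq_0_iff by linarith
qed

lemma norm_diff_less_norm_add:
  fixes \<alpha> \<rho> :: real and z :: complex
  assumes "\<alpha> > 0" "\<bar>\<rho>\<bar> < 1" "Re z \<ge> 0" "z \<noteq> 0"
  shows "cmod (of_real \<alpha> - of_real \<rho> * z) < cmod (z + of_real \<alpha>)"
proof -
  have gap: "cmod (z + of_real \<alpha>)^2 - cmod (of_real \<alpha> - of_real \<rho> * z)^2
        = (1 - \<rho>^2) * cmod z ^ 2 + 2 * \<alpha> * (1 + \<rho>) * Re z"
    unfolding cmod_power2 by (simp add: algebra_simps power2_eq_square)
  have "(1 - \<rho>^2) * cmod z ^ 2 > 0"
    using assms(2,4) by (simp add: abs_square_less_1)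
  moreover have "2 * \<alpha> * (1 + \<rho>) * Re z \<ge> 0"
    using assms(1-3) by simp
  ultimately have "cmod (of_real \<alpha> - of_real \<rho> * z)^2 < cmod (z + of_real \<alpha>)^2"
    using gap by linarith
  then show ?thesis
    by (simp add: power2_less_imp_less)
qed

lemma char_quasipoly_nonzero_right_half_plane:
  fixes z :: complex
  assumes "\<alpha> > 0" "\<beta> > 0" "\<bar>\<rho>\<bar> < 1" "\<bar>\<kappa>\<bar> < 1" "eps \<ge> 0" "tau \<ge> 0"
    and "z \<noteq> 0" "Re z \<ge> 0"
  shows "char_quasipoly \<alpha> \<beta> \<rho> \<kappa> eps tau z \<noteq> 0"
proof
  assume "char_quasipoly \<alpha> \<beta> \<rho> \<kappa> eps tau z = 0"
  then have "cmod ((z + of_real \<alpha>) * (z + of_real \<beta>) * (of_real eps * z + 1))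
      = cmod (exp (- (of_real tau * z))^2 * (of_real \<alpha> - of_real \<rho> * z) * (of_real \<beta> - of_real \<kappa> * z))"
    unfolding char_quasipoly_def by simp
  then have balance: "cmod (z + of_real \<alpha>) * cmod (z + of_real \<beta>) * cmod (of_real eps * z + 1)
      = cmod (exp (- (of_real tau * z)))^2
        * cmod (of_real \<alpha> - of_real \<rho> * z) * cmod (of_real \<beta> - of_real \<kappa> * z)"
    by (simp add: norm_mult norm_power)
  have "1 \<le> Re (of_real eps * z + 1)"
    using assms(5,8) by simp
  also have "\<dots> \<le> cmod (of_real eps * z + 1)"
    by (rule complex_Re_le_cmod)
  finally have delay_free: "cmod (of_real eps * z + 1) \<ge> 1" .
  have "cmod (exp (- (of_real tau * z))) \<le> 1"
    using assms(6,8) by (simp add: norm_exp_eq_Re)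
  then have delay: "cmod (exp (- (of_real tau * z)))^2 \<le> 1"
    by (simp add: power_le_one)
  have "cmod (exp (- (of_real tau * z)))^2
          * cmod (of_real \<alpha> - of_real \<rho> * z) * cmod (of_real \<beta> - of_real \<kappa> * z)
        \<le> cmod (of_real \<alpha> - of_real \<rho> * z) * cmod (of_real \<beta> - of_real \<kappa> * z)"
    using delay by (simp add: mult_left_le_one_le mult.assoc)
  also have "\<dots> < cmod (z + of_real \<alpha>) * cmod (z + of_real \<beta>)"
    using norm_diff_less_norm_add[OF assms(1,3,8,7)] norm_diff_less_norm_add[OF assms(2,4,8,7)]
    by (intro mult_strict_mono) auto
  also have "\<dots> \<le> cmod (z + of_real \<alpha>) * cmod (z + of_real \<beta>) * cmod (of_real eps * z + 1)"
    using mult_left_mono[OF delay_free] by simp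
  finally show False
    using balance by simp
qed

lemma cos_div_pos:
  fixes n \<theta> :: real
  assumes "n > 0" "0 \<le> \<theta>" "\<theta> < pi / 2"
  shows "cos \<theta> / n > 0"
  using assms by (intro divide_pos_pos cos_gt_zero_pi) auto

lemma coef_a1_pos: "c1 > 0 \<Longrightarrow> c3 > 0 \<Longrightarrow> coef_a1 c1 c3 > 0"
  by (simp add: coef_a1_def)

lemma coef_a1_minus_a2:
  assumes "c1 + c3 \<noteq> 0"
  shows "coef_a1 c1 c3 - coef_a2 c1 c3 = 2 * pi * c3"
proof -
  have "2 * c1 / (c1 + c3) - (c1 - c3) / (c1 + c3) = 1"
    using assms by (simp add: diff_divide_distrib[symmetric])
  then show ?thesis
    unfolding coef_a1_def coef_a2_def right_diff_distrib[symmetric] by simp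
qed

lemma coef_a5_pos: "c3 > 0 \<Longrightarrow> c5 > 0 \<Longrightarrow> coef_a5 c3 c5 > 0"
  by (simp add: coef_a5_def)

lemma abs_reflection_coeff_less_1:
  fixes c c' :: real
  assumes "c > 0" "c' > 0"
  shows "\<bar>(c - c') / (c + c')\<bar> < 1"
  using assms by (simp add: abs_less_iff field_simps)

lemma coef_a2_div_eq: "c1 > 0 \<Longrightarrow> c3 > 0 \<Longrightarrow>
    coef_a2 c1 c3 / (coef_a1 c1 c3 - coef_a2 c1 c3) = (c1 - c3) / (c1 + c3)"
  by (subst coef_a1_minus_a2) (auto simp: coef_a2_def)

lemma coef_a5_minus_1_eq: "c3 > 0 \<Longrightarrow> c5 > 0 \<Longrightarrow>
    coef_a5 c3 c5 - 1 = (c5 - c3) / (c5 + c3)"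
  by (simp add: coef_a5_def field_simps)

theorem lemma1:
  fixes n1 n3 n5 th1 th3 th5 a0 r2 r4 tau eps :: real
  assumes "n1 > 0" and "n3 > 0" and "n5 > 0"
    and "0 \<le> th1" and "th1 < pi / 2"
    and "0 \<le> th3" and "th3 < pi / 2"
    and "0 \<le> th5" and "th5 < pi / 2"
    and "n1 * sin th1 = n3 * sin th3" and "n3 * sin th3 = n5 * sin th5"
    and "a0 > 0" and "r2 > 0" and "r4 > 0" and "tau > 0"
    and "eps \<ge> 0"
  shows "let D = (\<lambda>s. det (charmat a0 r2 r4 tau (cos th1 / n1) (cos th3 / n3) (cos th5 / n5) eps s))
         in D 0 = 0 \<and> deriv D 0 \<noteq> 0 \<and> (\<forall>z. D z = 0 \<and> z \<noteq> 0 \<longrightarrow> Re z < 0)"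
proof -
  define c1 c3 c5 where "c1 = cos th1 / n1" and "c3 = cos th3 / n3" and "c5 = cos th5 / n5"
  have c_pos: "c1 > 0" "c3 > 0" "c5 > 0"
    unfolding c1_def c3_def c5_def using assms by (auto intro: cos_div_pos)
  define a1 a2 a5 where "a1 = coef_a1 c1 c3" and "a2 = coef_a2 c1 c3" and "a5 = coef_a5 c3 c5"
  have gap: "a1 - a2 = 2 * pi * c3"
    unfolding a1_def a2_def using c_pos by (simp add: coef_a1_minus_a2)
  have \<alpha>: "a1 * r2 > 0"
    unfolding a1_def using c_pos assms by (simp add: coef_a1_pos)
  have \<beta>: "(a1 - a2) * r4 * a5 > 0"
    unfolding gap a5_def using c_pos assms by (simp add: coef_a5_pos)
  have \<rho>: "\<bar>a2 / (a1 - a2)\<bar> < 1" and \<kappa>: "\<bar>a5 - 1\<bar> < 1"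
    unfolding a1_def a2_def a5_def using c_pos
    by (simp_all add: coef_a2_div_eq coef_a5_minus_1_eq abs_reflection_coeff_less_1)
  have D_eq: "(\<lambda>s. det (charmat a0 r2 r4 tau c1 c3 c5 eps s))
      = char_quasipoly (a1 * r2) ((a1 - a2) * r4 * a5) (a2 / (a1 - a2)) (a5 - 1) eps tau"
    unfolding a1_def a2_def a5_def using assms gap c_pos
    by (intro ext det_charmat_eq_char_quasipoly) (auto simp: a1_def a2_def)
  show ?thesis
    unfolding Let_def c1_def[symmetric] c3_def[symmetric] c5_def[symmetric] D_eq
    using char_quasipoly_at_0 deriv_char_quasipoly_at_0_nonzero[OF \<alpha> \<beta> \<rho> \<kappa>]
      char_quasipoly_nonzero_right_half_plane[OF \<alpha> \<beta> \<rho> \<kappa>] assms(15,16)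
    by (metis less_eq_real_def not_less)
qed

end
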